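(* Let $\mathcal{D}$ be a non-atomic distribution on $[0,1]$ with mean $\mu\in(0,1)$, and let $\varepsilon\in(0,1/2)$ be a constant. For any $n$, there exists a weight vector $(w_1,\ldots,w_n)$ with $\frac{w_{\max}}{w_{\min}}\le\frac{2}{(1-\mu)^2\varepsilon^2}$ such that for any $m\le(1-\varepsilon)\frac{n}{1-\mu}$, with high probability (probability tending to $1$ as $n\to\infty$) no weighted proportional (WPROP) allocation exists when each utility $u_i(g)$ is drawn independently from $\mathcal{D}$.
   Context: Agents $N=[n]$ with positive weights $w_i$, $W=\sum_i w_i$; items $M=[m]$; additive utilities $u_i(S)=\sum_{g\in S}u_i(g)$, each $u_i(g)$ drawn independently from $\mathcal{D}$. An allocation $(A_1,\ldots,A_n)$ (partition of $M$) is WPROP if $u_i(A_i)\ge \frac{w_i}{W}u_i(M)$ for all $i$. $w_{\max},w_{\min}$ are the maximum and minimum weights. *)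

theory Defs
  imports "HOL-Probability.Probability"
begin

text \<open>Agents are 0..<n, items are 0..<m. A utility profile is a function
  u :: nat \<times> nat \<Rightarrow> real, with u (i,g) the utility of agent i for item g.
  An allocation (partition of the items among the agents) is a map A from
  items to agents, with A_i = {g < m. A g = i}.\<close>

definition is_allocation :: "nat \<Rightarrow> nat \<Rightarrow> (nat \<Rightarrow> nat) \<Rightarrow> bool" where
  "is_allocation n m A \<longleftrightarrow> (\<forall>g<m. A g < n)"

definition bundle_util :: "(nat \<times> nat \<Rightarrow> real) \<Rightarrow> nat \<Rightarrow> nat set \<Rightarrow> real" where
  "bundle_util u i S = (\<Sum>g\<in>S. u (i, g))"

definition WPROP :: "nat \<Rightarrow> nat \<Rightarrow> (nat \<Rightarrow> real) \<Rightarrow> (nat \<times> nat \<Rightarrow> real) \<Rightarrow> (nat \<Rightarrow> nat) \<Rightarrow> bool" where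
  "WPROP n m w u A \<longleftrightarrow> is_allocation n m A \<and>
     (\<forall>i<n. bundle_util u i {g. g < m \<and> A g = i}
              \<ge> w i / (\<Sum>j<n. w j) * bundle_util u i {..<m})"

definition WPROP_exists :: "nat \<Rightarrow> nat \<Rightarrow> (nat \<Rightarrow> real) \<Rightarrow> (nat \<times> nat \<Rightarrow> real) \<Rightarrow> bool" where
  "WPROP_exists n m w u \<longleftrightarrow> (\<exists>A. WPROP n m w u A)"

definition util_space :: "real measure \<Rightarrow> nat \<Rightarrow> nat \<Rightarrow> (nat \<times> nat \<Rightarrow> real) measure" where
  "util_space D n m = PiM ({..<n} \<times> {..<m}) (\<lambda>_. D)"

end

theory Submission
  imports Defs "HOL-Real_Asymp.Real_Asymp"
begin

(* Give the first k = \<lfloor>\<epsilon> n / 2\<rfloor> agents the weight R = 2 / ((1 - \<mu>)^2 \<epsilon>^2) and the others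
   weight 1, so W = k R + n - k.  Utilities are almost surely positive, hence in a WPROP allocation
   every light agent receives an item and the heavy agents share at most m - (n - k) items, each
   worth at most 1 to them.  WPROP, however, gives the heavy agents together R / W times their
   utility for all items, and by Hoeffding's inequality that utility is at least (1 - d) \<mu> k m
   with probability at least 1 - exp (-2 (d \<mu>)^2 k m).  For m \<le> (1 - \<epsilon>) n / (1 - \<mu>) and
   d = \<epsilon> (1 - \<mu>) / 8 the choice of R makes R (1 - d) \<mu> k m / W exceed m - (n - k). *)

definition two_level_weights :: "nat \<Rightarrow> real \<Rightarrow> nat \<Rightarrow> real" where
  "two_level_weights k R = (\<lambda>i. if i < k then R else 1)"

lemma sum_two_level_weights:
  "k \<le> n \<Longrightarrow> (\<Sum>j<n. two_level_weights k R j) = real k * R + (real n - real k)"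
  by (induction n rule: dec_induct) (auto simp: two_level_weights_def)

lemma two_level_weights_pos: "0 < R \<Longrightarrow> 0 < two_level_weights k R i"
  by (simp add: two_level_weights_def)

lemma two_level_weights_ratio_le:
  assumes "1 \<le> R"
  shows "two_level_weights k R i / two_level_weights k R j \<le> R"
proof -
  have "1 / R \<le> 1" using assms by simp
  then have "1 / R \<le> R" using assms by linarith
  then show ?thesis using assms by (simp add: two_level_weights_def)
qed

lemma WPROP_bundle_nonempty:
  assumes A: "WPROP n m w u A" and i: "i < n"
    and w_pos: "\<And>j. j < n \<Longrightarrow> 0 < w j"
    and u_pos: "\<And>g. g < m \<Longrightarrow> 0 < u (i, g)" and "1 \<le> m"
  shows "\<exists>g<m. A g = i"
proof (rule ccontr)
  assume "\<not> ?thesis"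
  then have "{g. g < m \<and> A g = i} = {}" by auto
  then have "bundle_util u i {g. g < m \<and> A g = i} = 0" by (metis bundle_util_def sum.empty)
  moreover have "0 < (\<Sum>j<n. w j)" using i w_pos by (intro sum_pos) auto
  moreover have "0 < bundle_util u i {..<m}"
    unfolding bundle_util_def using u_pos \<open>1 \<le> m\<close> by (intro sum_pos) (auto simp: lessThan_empty_iff)
  ultimately have "0 < w i / (\<Sum>j<n. w j) * bundle_util u i {..<m}"
    using w_pos[OF i] by simp
  then show False using A i \<open>bundle_util u i {g. g < m \<and> A g = i} = 0\<close>
    unfolding WPROP_def by fastforce
qed

lemma WPROP_heavy_share_le:
  assumes A: "WPROP n m w u A" and "k \<le> n" and "1 \<le> m"
    and w_pos: "\<And>j. j < n \<Longrightarrow> 0 < w j"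
    and u_range: "\<And>i g. i < n \<Longrightarrow> g < m \<Longrightarrow> 0 < u (i, g) \<and> u (i, g) \<le> 1"
  shows "(\<Sum>i<k. w i / (\<Sum>j<n. w j) * bundle_util u i {..<m}) \<le> real m - real (n - k)"
proof -
  let ?heavy = "{g. g < m \<and> A g < k}" and ?light = "{g. g < m \<and> k \<le> A g}"
  have "{k..<n} \<subseteq> A ` ?light"
    using WPROP_bundle_nonempty[OF A _ w_pos] u_range \<open>1 \<le> m\<close> by fastforce
  then have "n - k \<le> card ?light"
    using surj_card_le[of ?light "{k..<n}" A] by simp
  moreover have "card ?heavy + card ?light = m"
  proof -
    have "?heavy \<union> ?light = {..<m}" by auto
    moreover have "card (?heavy \<union> ?light) = card ?heavy + card ?light"
      by (rule card_Un_disjoint) auto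
    ultimately show ?thesis by simp
  qed
  moreover have "(\<Sum>i<k. w i / (\<Sum>j<n. w j) * bundle_util u i {..<m})
      \<le> (\<Sum>i<k. bundle_util u i {g. g < m \<and> A g = i})"
    using A \<open>k \<le> n\<close> unfolding WPROP_def by (intro sum_mono) auto
  moreover have "(\<Sum>i<k. bundle_util u i {g. g < m \<and> A g = i}) = (\<Sum>g\<in>?heavy. u (A g, g))"
  proof -
    have "(\<Sum>g\<in>?heavy. u (A g, g)) = (\<Sum>i<k. \<Sum>g\<in>{g \<in> ?heavy. A g = i}. u (A g, g))"
      by (rule sum.group[symmetric]) auto
    also have "\<dots> = (\<Sum>i<k. bundle_util u i {g. g < m \<and> A g = i})"
      unfolding bundle_util_def by (intro sum.cong) auto
    finally show ?thesis ..
  qed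
  moreover have "(\<Sum>g\<in>?heavy. u (A g, g)) \<le> card ?heavy"
    using sum_mono[of ?heavy "\<lambda>g. u (A g, g)" "\<lambda>_. 1"] A u_range \<open>k \<le> n\<close>
    unfolding WPROP_def is_allocation_def by auto
  ultimately show ?thesis by linarith
qed

lemma not_WPROP_exists_two_level:
  assumes "k \<le> n" "1 \<le> m" "0 < R"
    and u_range: "\<forall>j\<in>{..<n} \<times> {..<m}. 0 < u j \<and> u j \<le> 1"
    and "real m - real (n - k) < R / (real k * R + (real n - real k)) * (\<Sum>i<k. \<Sum>g<m. u (i, g))"
  shows "\<not> WPROP_exists n m (two_level_weights k R) u"
proof
  let ?w = "two_level_weights k R"
  assume "WPROP_exists n m ?w u"
  then obtain A where "WPROP n m ?w u A" unfolding WPROP_exists_def by blast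
  then have "(\<Sum>i<k. ?w i / (\<Sum>j<n. ?w j) * bundle_util u i {..<m}) \<le> real m - real (n - k)"
    using assms by (intro WPROP_heavy_share_le) (auto simp: two_level_weights_def)
  moreover have "(\<Sum>i<k. ?w i / (\<Sum>j<n. ?w j) * bundle_util u i {..<m})
      = R / (real k * R + (real n - real k)) * (\<Sum>i<k. \<Sum>g<m. u (i, g))"
    using sum_two_level_weights[OF \<open>k \<le> n\<close>]
    by (simp add: two_level_weights_def bundle_util_def sum_distrib_left)
  ultimately show False using assms(5) by linarith
qed

lemma WPROP_exists_iff_PiE:
  "WPROP_exists n m w u \<longleftrightarrow> (\<exists>A\<in>{..<m} \<rightarrow>\<^sub>E {..<n}. WPROP n m w u A)"
proof
  assume "WPROP_exists n m w u"
  then obtain A where A: "WPROP n m w u A" unfolding WPROP_exists_def by blast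
  have "\<And>i. {g. g < m \<and> restrict A {..<m} g = i} = {g. g < m \<and> A g = i}" by auto
  then have "WPROP n m w u (restrict A {..<m})"
    using A unfolding WPROP_def is_allocation_def by simp
  moreover have "restrict A {..<m} \<in> {..<m} \<rightarrow>\<^sub>E {..<n}"
    using A unfolding WPROP_def is_allocation_def by auto
  ultimately show "\<exists>A\<in>{..<m} \<rightarrow>\<^sub>E {..<n}. WPROP n m w u A" by blast
qed (auto simp: WPROP_exists_def)

lemma measurable_util_space_component:
  assumes "sets D = sets borel" and "j \<in> {..<n} \<times> {..<m}"
  shows "(\<lambda>u. u j) \<in> borel_measurable (util_space D n m)"
  using measurable_component_singleton[OF assms(2), of "\<lambda>_. D"] measurable_cong_sets[OF refl assms(1)]
  unfolding util_space_def by blast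

lemma sets_not_WPROP_exists:
  assumes "sets D = sets borel"
  shows "{u \<in> space (util_space D n m). \<not> WPROP_exists n m w u} \<in> sets (util_space D n m)"
proof -
  let ?M = "util_space D n m"
  have bundle_util_measurable: "(\<lambda>u. bundle_util u i S) \<in> borel_measurable ?M"
    if "i < n" "S \<subseteq> {..<m}" for i S
    unfolding bundle_util_def using that measurable_util_space_component[OF assms]
    by (intro borel_measurable_sum) auto
  have "{u \<in> space ?M. WPROP n m w u A} \<in> sets ?M" for A
  proof (cases "is_allocation n m A")
    case True
    have "{u \<in> space ?M. WPROP n m w u A} = {u \<in> space ?M. \<forall>i\<in>{..<n}.
        w i / (\<Sum>j<n. w j) * bundle_util u i {..<m} \<le> bundle_util u i {g. g < m \<and> A g = i}}"
      using True by (auto simp: WPROP_def)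
    also have "\<dots> \<in> sets ?M"
    proof (intro sets.sets_Collect_finite_All)
      fix i assume "i \<in> {..<n}"
      then have [measurable]: "(\<lambda>u. bundle_util u i {..<m}) \<in> borel_measurable ?M"
          "(\<lambda>u. bundle_util u i {g. g < m \<and> A g = i}) \<in> borel_measurable ?M"
        by (auto intro!: bundle_util_measurable)
      show "{u \<in> space ?M. w i / (\<Sum>j<n. w j) * bundle_util u i {..<m}
          \<le> bundle_util u i {g. g < m \<and> A g = i}} \<in> sets ?M" by measurable
    qed auto
    finally show ?thesis .
  qed (simp add: WPROP_def)
  then have "{u \<in> space ?M. \<exists>A\<in>{..<m} \<rightarrow>\<^sub>E {..<n}. WPROP n m w u A} \<in> sets ?M"
    by (intro sets.sets_Collect_finite_Ex) (auto simp: finite_PiE)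
  then have "space ?M - {u \<in> space ?M. \<exists>A\<in>{..<m} \<rightarrow>\<^sub>E {..<n}. WPROP n m w u A} \<in> sets ?M"
    by auto
  also have "space ?M - {u \<in> space ?M. \<exists>A\<in>{..<m} \<rightarrow>\<^sub>E {..<n}. WPROP n m w u A}
      = {u \<in> space ?M. \<not> WPROP_exists n m w u}"
    by (auto simp: WPROP_exists_iff_PiE)
  finally show ?thesis .
qed

lemma prob_space_util_space: "prob_space D \<Longrightarrow> prob_space (util_space D n m)"
  unfolding util_space_def by (rule prob_space_PiM)

lemma AE_util_space_components:
  assumes "prob_space D" and "AE x in D. P x"
  shows "AE u in util_space D n m. \<forall>j\<in>{..<n} \<times> {..<m}. P (u j)"
  unfolding util_space_def using assms
  by (intro eventually_ball_finite ballI AE_PiM_component) auto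

lemma AE_pos_le_one:
  fixes D :: "real measure"
  assumes "prob_space D" "sets D = sets borel" "measure D {0..1} = 1" "measure D {0} = 0"
  shows "AE x in D. 0 < x \<and> x \<le> 1"
proof -
  interpret prob_space D by fact
  have "measure D ({0<..1} \<union> {0}) = measure D {0<..1} + measure D {0}"
    using assms(2) by (intro finite_measure_Union) auto
  moreover have "{0<..1} \<union> {0} = {0..1::real}" by auto
  ultimately have "measure D {0<..1} = 1" using assms(3,4) by simp
  from AE_prob_1[OF this] show ?thesis by (auto elim: AE_mp)
qed

lemma indep_vars_PiM_components:
  assumes M: "\<And>i. i \<in> I \<Longrightarrow> prob_space (M i)" and "I \<noteq> {}"
  shows "prob_space.indep_vars (PiM I M) M (\<lambda>i x. x i) I"
proof -
  interpret prob_space "PiM I M" using M by (rule prob_space_PiM)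
  have "distr (PiM I M) (PiM I M) (\<lambda>x. restrict x I) = distr (PiM I M) (PiM I M) (\<lambda>x. x)"
    by (intro distr_cong) (auto simp: space_PiM PiE_def extensional_restrict)
  also have "\<dots> = PiM I M" by simp
  also have "\<dots> = PiM I (\<lambda>i. distr (PiM I M) (M i) (\<lambda>x. x i))"
    by (intro PiM_cong refl distr_PiM_component[OF M, symmetric])
  finally show ?thesis
    using \<open>I \<noteq> {}\<close> by (subst indep_vars_iff_distr_eq_PiM') auto
qed

lemma util_space_heavy_sum_lower_tail:
  fixes D :: "real measure" and \<mu> t :: real
  assumes PD: "prob_space D" and SD: "sets D = sets borel"
    and range: "AE x in D. x \<in> {0..1}" and mu: "\<mu> = (\<integral>x. x \<partial>D)"
    and "1 \<le> k" "k \<le> n" "1 \<le> m" "0 \<le> t"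
  shows "measure (util_space D n m) {u \<in> space (util_space D n m).
           (\<Sum>i<k. \<Sum>g<m. u (i, g)) \<le> real k * real m * \<mu> - t} \<le> exp (-2 * t^2 / (real k * real m))"
proof -
  define I where "I = {..<n} \<times> {..<m}"
  define H where "H = {..<k} \<times> {..<m}"
  let ?M = "util_space D n m"
  have M_eq: "?M = PiM I (\<lambda>_. D)" unfolding util_space_def I_def ..
  interpret prob_space ?M using PD by (rule prob_space_util_space)
  have "H \<subseteq> I" "I \<noteq> {}" using \<open>1 \<le> k\<close> \<open>k \<le> n\<close> \<open>1 \<le> m\<close> by (auto simp: H_def I_def lessThan_empty_iff)
  have "indep_vars (\<lambda>_. D) (\<lambda>j u. u j) I"
    unfolding M_eq using PD \<open>I \<noteq> {}\<close> by (rule indep_vars_PiM_components)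
  then have "indep_vars (\<lambda>_. borel) (\<lambda>j u. u j) I"
    using SD measurable_cong_sets[OF refl SD, of ?M] unfolding indep_vars_def by simp
  then have "indep_vars (\<lambda>_. borel) (\<lambda>j u. u j) H"
    using \<open>H \<subseteq> I\<close> by (rule indep_vars_subset)
  have expectation_component: "expectation (\<lambda>u. u j) = \<mu>" if "j \<in> I" for j
  proof -
    have "(\<lambda>u. u j) \<in> measurable ?M D"
      unfolding M_eq using that by (rule measurable_component_singleton)
    then have "expectation (\<lambda>u. u j) = integral\<^sup>L (distr ?M D (\<lambda>u. u j)) (\<lambda>x. x)"
      using measurable_ident_sets[OF SD] by (intro integral_distr[symmetric]) auto
    then show ?thesis unfolding M_eq using distr_PiM_component[of I "\<lambda>_. D" j] PD that mu by simp
  qed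
  interpret Hoeffding_ineq ?M H "\<lambda>j u. u j" "\<lambda>_. 0" "\<lambda>_. 1" "real k * real m * \<mu>"
  proof unfold_locales
    show "finite H" by (simp add: H_def)
    show "AE u in ?M. u j \<in> {0..1}" if "j \<in> H" for j
      using AE_util_space_components[OF PD range, of n m] that \<open>H \<subseteq> I\<close>
      unfolding I_def by (auto elim: AE_mp)
    have "(\<Sum>j\<in>H. expectation (\<lambda>u. u j)) = (\<Sum>j\<in>H. \<mu>)"
      using expectation_component \<open>H \<subseteq> I\<close> by (intro sum.cong) auto
    then have "(\<Sum>j\<in>H. expectation (\<lambda>u. u j)) = real k * real m * \<mu>"
      by (simp add: H_def)
    then show "real k * real m * \<mu> \<equiv> (\<Sum>j\<in>H. expectation (\<lambda>u. u j))" by simp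
  qed fact
  have "(\<Sum>j\<in>H. (1 - 0)\<^sup>2) > (0::real)" using \<open>1 \<le> k\<close> \<open>1 \<le> m\<close> by (simp add: H_def)
  from Hoeffding_ineq_le[OF \<open>0 \<le> t\<close> this] show ?thesis
    by (simp add: H_def sum.cartesian_product)
qed

lemma prob_not_WPROP_exists_two_level_ge:
  fixes D :: "real measure" and \<mu> R t :: real
  assumes PD: "prob_space D" and SD: "sets D = sets borel"
    and pos: "AE x in D. 0 < x \<and> x \<le> 1" and mu: "\<mu> = (\<integral>x. x \<partial>D)"
    and "1 \<le> k" "k \<le> n" "1 \<le> m" "0 < R" "0 \<le> t"
    and shortfall: "real m - real (n - k) \<le> R / (real k * R + (real n - real k)) * (real k * real m * \<mu> - t)"
  shows "1 - exp (-2 * t^2 / (real k * real m)) \<le> measure (util_space D n m)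
           {u \<in> space (util_space D n m). \<not> WPROP_exists n m (two_level_weights k R) u}"
proof -
  let ?M = "util_space D n m" and ?w = "two_level_weights k R"
  let ?W = "real k * R + (real n - real k)"
  interpret prob_space ?M using PD by (rule prob_space_util_space)
  define B where "B = {u \<in> space ?M. (\<Sum>i<k. \<Sum>g<m. u (i, g)) \<le> real k * real m * \<mu> - t}"
  have "(\<lambda>u. u (i, g)) \<in> borel_measurable ?M" if "i < k" "g < m" for i g
    using measurable_util_space_component[OF SD] that \<open>k \<le> n\<close> by auto
  then have "B \<in> events" unfolding B_def by measurable
  have "prob B \<le> exp (-2 * t^2 / (real k * real m))"
    unfolding B_def using pos \<open>1 \<le> k\<close> \<open>k \<le> n\<close> \<open>1 \<le> m\<close> \<open>0 \<le> t\<close>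
    by (intro util_space_heavy_sum_lower_tail[OF PD SD _ mu]) (auto elim: AE_mp)
  have "0 < ?W" using \<open>0 < R\<close> \<open>1 \<le> k\<close> \<open>k \<le> n\<close> by (simp add: add_pos_nonneg)
  have "AE u in ?M. u \<in> space ?M - B \<longrightarrow> \<not> WPROP_exists n m ?w u"
    using AE_util_space_components[OF PD pos, of n m]
  proof eventually_elim
    case (elim u)
    show ?case
    proof
      assume "u \<in> space ?M - B"
      then have "R / ?W * (real k * real m * \<mu> - t) < R / ?W * (\<Sum>i<k. \<Sum>g<m. u (i, g))"
        using \<open>0 < R\<close> \<open>0 < ?W\<close> unfolding B_def by (intro mult_strict_left_mono) auto
      then show "\<not> WPROP_exists n m ?w u"
        using elim shortfall \<open>k \<le> n\<close> \<open>1 \<le> m\<close> \<open>0 < R\<close> by (intro not_WPROP_exists_two_level) auto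
    qed
  qed
  then have "prob (space ?M - B) \<le> prob {u \<in> space ?M. \<not> WPROP_exists n m ?w u}"
    using sets_not_WPROP_exists[OF SD] by (intro finite_measure_mono_AE) auto
  then show ?thesis
    using prob_compl[OF \<open>B \<in> events\<close>] \<open>prob B \<le> _\<close> by linarith
qed

(* c is the margin of the inequality at K = a N and M = x N, divided by N^2; the bound on N
   absorbs the rounding loss K \<ge> a N - 1. *)
lemma two_level_margin_at_max_items:
  fixes s R a x c N K :: real
  assumes "1 \<le> R" "0 \<le> s" "0 < x"
    and c_def: "c = s * x * a - (x - 1 + a) * (a * (R - 1) + 1)" and "0 < c"
    and N: "s * x / c \<le> N" and K: "a * N - 1 \<le> K" "K \<le> a * N" "0 \<le> K"
  shows "(x * N - N + K) * (K * R + N - K) \<le> s * K * (x * N)"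
proof -
  have "0 \<le> s * x / c" using \<open>0 \<le> s\<close> \<open>0 < x\<close> \<open>0 < c\<close> by simp
  then have "0 \<le> N" using N by linarith
  have "0 \<le> K * R + N - K" using \<open>0 \<le> N\<close> K \<open>1 \<le> R\<close> mult_left_mono[of 1 R K] by simp
  show ?thesis
  proof (cases "x * N - N + K \<le> 0")
    case True
    have "(x * N - N + K) * (K * R + N - K) \<le> 0"
      using True \<open>0 \<le> K * R + N - K\<close> by (rule mult_nonpos_nonneg)
    also have "0 \<le> s * K * (x * N)" using \<open>0 \<le> s\<close> K \<open>0 < x\<close> \<open>0 \<le> N\<close> by simp
    finally show ?thesis .
  next
    case False
    have "K * R + N - K \<le> a * N * (R - 1) + N"
      using K \<open>1 \<le> R\<close> mult_right_mono[of K "a * N" "R - 1"] by (simp add: algebra_simps)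
    then have "(x * N - N + K) * (K * R + N - K) \<le> (x * N - N + a * N) * (a * N * (R - 1) + N)"
      using False K \<open>0 \<le> K * R + N - K\<close> by (intro mult_mono) auto
    also have "\<dots> = s * (a * N - 1) * (x * N) - N * (N * c - s * x)"
      unfolding c_def by (simp add: algebra_simps)
    also have "\<dots> \<le> s * (a * N - 1) * (x * N)"
    proof -
      have "s * x \<le> N * c" using N \<open>0 < c\<close> by (simp add: field_simps)
      then show ?thesis using \<open>0 \<le> N\<close> mult_left_mono[of "s * x" "N * c" N] by simp
    qed
    also have "\<dots> \<le> s * K * (x * N)"
      using K \<open>0 \<le> s\<close> \<open>0 < x\<close> \<open>0 \<le> N\<close> by (intro mult_right_mono mult_left_mono) auto
    finally show ?thesis .
  qed
qed

lemma two_level_margin: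
  fixes s R a x c N K M :: real
  assumes "1 \<le> R" "0 \<le> s" "0 < x"
    and "c = s * x * a - (x - 1 + a) * (a * (R - 1) + 1)" and "0 < c"
    and "s * x / c \<le> N" and K: "a * N - 1 \<le> K" "K \<le> a * N" "0 \<le> K" "K \<le> N"
    and M: "0 \<le> M" "M \<le> x * N"
  shows "(M - N + K) * (K * R + N - K) \<le> s * K * M"
proof -
  define W where "W = K * R + N - K"
  have "0 \<le> W" unfolding W_def using K \<open>1 \<le> R\<close> mult_left_mono[of 1 R K] by simp
  \<comment> \<open>the difference of the two sides is affine in M, so the endpoints M = 0 and M = x N suffice\<close>
  have affine: "s * K * M' - (M' - N + K) * W = M' * (s * K - W) + (N - K) * W" for M'
    by (simp add: algebra_simps)
  have "0 \<le> s * K * (x * N) - (x * N - N + K) * W"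
    using two_level_margin_at_max_items[OF assms(1-9)] unfolding W_def by simp
  then have "0 \<le> s * K * M - (M - N + K) * W"
    using M K \<open>0 \<le> W\<close> unfolding affine
    by (cases "0 \<le> s * K - W") (auto intro: order_trans mult_right_mono_neg)
  then show ?thesis unfolding W_def by simp
qed

lemma two_level_margin_constant_pos:
  fixes \<mu> \<epsilon> :: real
  assumes "0 < \<mu>" "\<mu> < 1" "0 < \<epsilon>" "\<epsilon> < 1/2"
  defines "p \<equiv> 1 - \<mu>"
  defines "R \<equiv> 2 / (p^2 * \<epsilon>^2)" and "d \<equiv> \<epsilon> * p / 8" and "a \<equiv> \<epsilon> / 2" and "x \<equiv> (1 - \<epsilon>) / p"
  shows "0 < R * (1 - d) * \<mu> * x * a - (x - 1 + a) * (a * (R - 1) + 1)"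
proof -
  have p: "0 < p" "p < 1" using assms by (auto simp: p_def)
  define T where "T = 1 / (p^2 * \<epsilon>)"
  have aR: "a * R = T" and "0 < T" and px: "p * x = 1 - \<epsilon>"
    using p \<open>0 < \<epsilon>\<close> by (auto simp: a_def R_def T_def x_def field_simps power2_eq_square)
  have "p * (x - 1 + a) = \<mu> - \<epsilon> + a * p"
    using px unfolding p_def by (simp add: algebra_simps)
  have "p * (R * (1 - d) * \<mu> * x * a - (x - 1 + a) * (a * (R - 1) + 1))
      = (a * R) * (1 - d) * \<mu> * (p * x) - (p * (x - 1 + a)) * (a * R - a + 1)"
    by (simp add: algebra_simps)
  also have "\<dots> = T * (1 - d) * \<mu> * (1 - \<epsilon>) - (\<mu> - \<epsilon> + a * p) * (T - a + 1)"
    unfolding aR px \<open>p * (x - 1 + a) = \<mu> - \<epsilon> + a * p\<close> ..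
  also have "\<dots> = T * ((1 - d) * \<mu> * (1 - \<epsilon>) - (\<mu> - \<epsilon> + a * p)) - (\<mu> - \<epsilon> + a * p) * (1 - a)"
    by (simp add: algebra_simps)
  finally have eq: "p * (R * (1 - d) * \<mu> * x * a - (x - 1 + a) * (a * (R - 1) + 1))
      = T * ((1 - d) * \<mu> * (1 - \<epsilon>) - (\<mu> - \<epsilon> + a * p)) - (\<mu> - \<epsilon> + a * p) * (1 - a)" .
  have "3 * \<epsilon> * p / 8 \<le> (1 - d) * \<mu> * (1 - \<epsilon>) - (\<mu> - \<epsilon> + a * p)"
  proof -
    have "(1 - d) * \<mu> * (1 - \<epsilon>) - (\<mu> - \<epsilon> + a * p) = \<epsilon> * p / 2 - d * \<mu> * (1 - \<epsilon>)"
      unfolding a_def p_def by (simp add: algebra_simps)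
    moreover have "d * \<mu> * (1 - \<epsilon>) \<le> d" unfolding d_def using assms p by (simp add: mult_le_one)
    ultimately show ?thesis unfolding d_def by simp
  qed
  then have "T * (3 * \<epsilon> * p / 8) \<le> T * ((1 - d) * \<mu> * (1 - \<epsilon>) - (\<mu> - \<epsilon> + a * p))"
    using \<open>0 < T\<close> by (simp add: mult_left_mono)
  moreover have "T * (3 * \<epsilon> * p / 8) = 3 / (8 * p)"
    unfolding T_def using p \<open>0 < \<epsilon>\<close> by (simp add: field_simps power2_eq_square)
  moreover have "(\<mu> - \<epsilon> + a * p) * (1 - a) \<le> \<mu>"
  proof (cases "0 \<le> \<mu> - \<epsilon> + a * p")
    case True
    have "(\<mu> - \<epsilon> + a * p) * (1 - a) \<le> \<mu> - \<epsilon> + a * p"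
      using True assms by (simp add: a_def mult_left_le)
    also have "\<dots> \<le> \<mu>" using p assms by (simp add: a_def mult_le_one)
    finally show ?thesis .
  next
    case False
    then have "(\<mu> - \<epsilon> + a * p) * (1 - a) \<le> 0"
      using assms by (intro mult_nonpos_nonneg) (auto simp: a_def)
    then show ?thesis using assms by simp
  qed
  moreover have "\<mu> < 3 / (8 * p)"
  proof -
    have "0 \<le> (2 * p - 1) * (2 * p - 1)" by simp
    then have "8 * p * \<mu> < 3" unfolding p_def by (simp add: algebra_simps)
    then show ?thesis using p by (simp add: field_simps)
  qed
  ultimately have "0 < p * (R * (1 - d) * \<mu> * x * a - (x - 1 + a) * (a * (R - 1) + 1))"
    using eq by linarith
  then show ?thesis using p by (simp add: zero_less_mult_iff)
qed

(* The first \<lfloor>a n\<rfloor> agents get weight R, there are at most x n items, and d is the relative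
   deviation of the heavy agents' total utility from its mean that Hoeffding's inequality rules out. *)
locale two_level_construction =
  fixes D :: "real measure" and \<mu> R d a x :: real
  assumes prob_space_D: "prob_space D" and sets_D: "sets D = sets borel"
    and utility_range: "AE y in D. 0 < y \<and> y \<le> 1" and mean: "\<mu> = (\<integral>y. y \<partial>D)"
    and mean_pos: "0 < \<mu>" and R_ge_1: "1 \<le> R" and d: "0 < d" "d < 1"
    and a: "0 < a" "a \<le> 1" and x_pos: "0 < x"
    and margin_pos: "0 < R * (1 - d) * \<mu> * x * a - (x - 1 + a) * (a * (R - 1) + 1)"
begin

definition margin :: real where
  "margin = R * (1 - d) * \<mu> * x * a - (x - 1 + a) * (a * (R - 1) + 1)"

lemma margin_gt_0: "0 < margin"
  using margin_pos by (simp add: margin_def)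

lemma heavy_agents_margin:
  assumes n: "R * (1 - d) * \<mu> * x / margin \<le> real n" "1 \<le> a * real n"
    and m: "1 \<le> m" "real m \<le> x * real n"
  defines "k \<equiv> nat \<lfloor>a * real n\<rfloor>"
  shows "1 \<le> k" and "k \<le> n" and "a * real n - 1 \<le> real k"
    and "real m - real (n - k)
      \<le> R / (real k * R + (real n - real k)) * (real k * real m * \<mu> - d * \<mu> * real k * real m)"
proof -
  show k: "a * real n - 1 \<le> real k" "1 \<le> k"
    using n by (auto simp: k_def le_nat_iff le_floor_iff)
  have "real k \<le> a * real n" using n by (simp add: k_def)
  moreover have "a * real n \<le> real n" using a(1) a(2) by (intro mult_left_le_one_le) auto
  ultimately show "k \<le> n" by linarith
  define W where "W = real k * R + (real n - real k)"
  have "0 < W" using R_ge_1 \<open>1 \<le> k\<close> \<open>k \<le> n\<close> by (simp add: W_def add_pos_nonneg)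
  have "0 \<le> R * (1 - d) * \<mu>" using R_ge_1 d(2) mean_pos by simp
  then have "(real m - real n + real k) * (real k * R + real n - real k) \<le> R * (1 - d) * \<mu> * real k * real m"
    using \<open>k \<le> n\<close> \<open>real k \<le> a * real n\<close> m
    by (intro two_level_margin[OF R_ge_1 _ x_pos margin_def margin_gt_0 n(1) k(1)]) auto
  then have "real m - real n + real k \<le> R * (1 - d) * \<mu> * real k * real m / W"
    using \<open>0 < W\<close> by (simp add: W_def add_diff_eq pos_le_divide_eq)
  moreover have "real m - real (n - k) = real m - real n + real k"
    using \<open>k \<le> n\<close> by (simp add: of_nat_diff)
  moreover have "R * (1 - d) * \<mu> * real k * real m / W
      = R / W * (real k * real m * \<mu> - d * \<mu> * real k * real m)"
    by (simp add: algebra_simps diff_divide_distrib)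
  ultimately show "real m - real (n - k)
      \<le> R / (real k * R + (real n - real k)) * (real k * real m * \<mu> - d * \<mu> * real k * real m)"
    unfolding W_def by simp
qed

lemma prob_not_WPROP_exists_ge:
  assumes n: "R * (1 - d) * \<mu> * x / margin \<le> real n" "1 \<le> a * real n"
    and m: "1 \<le> m" "real m \<le> x * real n"
  shows "1 - exp (-2 * (d * \<mu>)^2 * (a * real n - 1)) \<le> measure (util_space D n m)
           {u \<in> space (util_space D n m). \<not> WPROP_exists n m (two_level_weights (nat \<lfloor>a * real n\<rfloor>) R) u}"
proof -
  define k where "k = nat \<lfloor>a * real n\<rfloor>"
  define t where "t = d * \<mu> * real k * real m"
  note k = heavy_agents_margin[OF assms, folded k_def t_def]
  have "1 - exp (-2 * t^2 / (real k * real m)) \<le> measure (util_space D n m)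
      {u \<in> space (util_space D n m). \<not> WPROP_exists n m (two_level_weights k R) u}"
    using k m R_ge_1 d(1) mean_pos
    by (intro prob_not_WPROP_exists_two_level_ge[OF prob_space_D sets_D utility_range mean]) (auto simp: t_def)
  moreover have "-2 * t^2 / (real k * real m) = -2 * (d * \<mu>)^2 * (real k * real m)"
    using k m by (simp add: t_def power2_eq_square)
  moreover have "a * real n - 1 \<le> real k * real m"
  proof -
    have "real k * 1 \<le> real k * real m" using m by (intro mult_left_mono) auto
    then show ?thesis using k by linarith
  qed
  then have "-2 * (d * \<mu>)^2 * (real k * real m) \<le> -2 * (d * \<mu>)^2 * (a * real n - 1)"
    by (intro mult_left_mono_neg) simp_all
  ultimately have "exp (-2 * t^2 / (real k * real m)) \<le> exp (-2 * (d * \<mu>)^2 * (a * real n - 1))"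
    by simp
  with \<open>1 - exp (-2 * t^2 / (real k * real m)) \<le> _\<close> show ?thesis unfolding k_def by linarith
qed

lemma tendsto_prob_not_WPROP_exists:
  assumes "\<forall>\<^sub>F n in sequentially. 1 \<le> m n \<and> real (m n) \<le> x * real n"
  shows "(\<lambda>n. measure (util_space D n (m n)) {u \<in> space (util_space D n (m n)).
           \<not> WPROP_exists n (m n) (two_level_weights (nat \<lfloor>a * real n\<rfloor>) R) u}) \<longlonglongrightarrow> 1"
proof (rule tendsto_sandwich)
  have "\<forall>\<^sub>F n in sequentially. max (R * (1 - d) * \<mu> * x / margin) (1 / a) \<le> real n"
    using filterlim_real_sequentially[unfolded filterlim_at_top] by blast
  with assms show "\<forall>\<^sub>F n in sequentially. 1 - exp (-2 * (d * \<mu>)^2 * (a * real n - 1))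
      \<le> measure (util_space D n (m n)) {u \<in> space (util_space D n (m n)).
           \<not> WPROP_exists n (m n) (two_level_weights (nat \<lfloor>a * real n\<rfloor>) R) u}"
  proof eventually_elim
    case (elim n)
    then have "1 \<le> a * real n" using a(1) by (simp add: divide_le_eq mult.commute)
    with elim show ?case by (intro prob_not_WPROP_exists_ge) auto
  qed
  show "\<forall>\<^sub>F n in sequentially. measure (util_space D n (m n)) {u \<in> space (util_space D n (m n)).
      \<not> WPROP_exists n (m n) (two_level_weights (nat \<lfloor>a * real n\<rfloor>) R) u} \<le> 1"
    using prob_space_util_space[OF prob_space_D] by (simp add: prob_space.prob_le_1)
  show "(\<lambda>n. 1 - exp (-2 * (d * \<mu>)^2 * (a * real n - 1))) \<longlonglongrightarrow> 1"
    using d(1) mean_pos a(1) by real_asymp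
qed simp

end

theorem theorem2:
  fixes D :: "real measure" and \<mu> \<epsilon> :: real
  assumes "prob_space D"
    and "sets D = sets borel"
    and "measure D {0..1} = 1"
    and "\<And>x. measure D {x} = 0"
    and "\<mu> = (\<integral>x. x \<partial>D)"
    and "0 < \<mu>" and "\<mu> < 1"
    and "0 < \<epsilon>" and "\<epsilon> < 1/2"
  shows "\<exists>w :: nat \<Rightarrow> nat \<Rightarrow> real.
           (\<forall>n. (\<forall>i<n. 0 < w n i) \<and>
                (\<forall>i<n. \<forall>j<n. w n i / w n j \<le> 2 / ((1 - \<mu>)^2 * \<epsilon>^2))) \<and>
           (\<forall>m :: nat \<Rightarrow> nat.
              (\<forall>\<^sub>F n in sequentially. 1 \<le> m n \<and> real (m n) \<le> (1 - \<epsilon>) * real n / (1 - \<mu>)) \<longrightarrow>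
              ((\<lambda>n. measure (util_space D n (m n))
                      {u \<in> space (util_space D n (m n)). \<not> WPROP_exists n (m n) (w n) u})
                 \<longlonglongrightarrow> 1))"
proof -
  define R where "R = 2 / ((1 - \<mu>)^2 * \<epsilon>^2)"
  define d where "d = \<epsilon> * (1 - \<mu>) / 8"
  define a where "a = \<epsilon> / 2"
  define x where "x = (1 - \<epsilon>) / (1 - \<mu>)"
  have "(1 - \<mu>)^2 * \<epsilon>^2 \<le> 1 * 1"
    using assms(6-9) by (intro mult_mono power_le_one) auto
  then have "1 \<le> R" using assms(6-9) by (simp add: R_def)
  interpret two_level_construction D \<mu> R d a x
  proof (rule two_level_construction.intro)
    show "AE y in D. 0 < y \<and> y \<le> 1" using assms(1-4) by (rule AE_pos_le_one)
    show "0 < R * (1 - d) * \<mu> * x * a - (x - 1 + a) * (a * (R - 1) + 1)"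
      using two_level_margin_constant_pos[OF assms(6-9)] by (simp add: R_def d_def a_def x_def)
    show "0 < d" "d < 1" "0 < a" "a \<le> 1" "0 < x"
      using assms(6-9) mult_strict_mono[of \<epsilon> 1 "1 - \<mu>" 1] by (auto simp: d_def a_def x_def)
  qed (fact assms(1) assms(2) assms(5) assms(6) \<open>1 \<le> R\<close>)+
  show ?thesis
  proof (intro exI[of _ "\<lambda>n. two_level_weights (nat \<lfloor>a * real n\<rfloor>) R"] conjI allI impI)
    show "0 < two_level_weights (nat \<lfloor>a * real n\<rfloor>) R i" for n i
      using \<open>1 \<le> R\<close> by (simp add: two_level_weights_pos)
    show "two_level_weights (nat \<lfloor>a * real n\<rfloor>) R i / two_level_weights (nat \<lfloor>a * real n\<rfloor>) R j
        \<le> 2 / ((1 - \<mu>)^2 * \<epsilon>^2)" for n i j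
      using two_level_weights_ratio_le[OF \<open>1 \<le> R\<close>] by (simp add: R_def)
  next
    fix m :: "nat \<Rightarrow> nat"
    assume "\<forall>\<^sub>F n in sequentially. 1 \<le> m n \<and> real (m n) \<le> (1 - \<epsilon>) * real n / (1 - \<mu>)"
    then show "(\<lambda>n. measure (util_space D n (m n)) {u \<in> space (util_space D n (m n)).
        \<not> WPROP_exists n (m n) (two_level_weights (nat \<lfloor>a * real n\<rfloor>) R) u}) \<longlonglongrightarrow> 1"
      by (intro tendsto_prob_not_WPROP_exists) (simp add: x_def)
  qed
qed

end
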